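(* Let $T\subset\mathbb{R}^d$ ($d\in\{2,3\}$) be a nondegenerate simplex. The set $\{S^i:i\in\mathcal{V}\}$ (if $d=2$), resp. $\{S^i_q:i\in\mathcal{V},\ q=0,1\}$ (if $d=3$), is a basis of $\mathbb{D}$. Moreover, for $i\neq j$, $i,j\in\mathcal{V}$, the normal-tangential components on the facet $F_j$ vanish: $(S^i)_{nt}|_{F_j}=0$ and $(S^i_q)_{nt}|_{F_j}=0$, while on $F_i$ these normal-tangential components do not vanish. When $d=3$ and $i\in\mathcal{V}$, $$t_{i+2,i+3}^T S^i_0 n_i=0,\quad t_{i+1,i+2}^T S^i_0 n_i\neq0,\quad t_{i+3,i+1}^T S^i_0 n_i\neq 0,$$ $$t_{i+2,i+3}^T S^i_1 n_i\neq0,\quad t_{i+1,i+2}^T S^i_1 n_i\neq0,\quad t_{i+3,i+1}^T S^i_1 n_i=0.$$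
   Context: $\mathcal{V}=\{0,1,2\}$ if $d=2$ and $\{0,1,2,3\}$ if $d=3$; $V_i$ ($i\in\mathcal{V}$) are the vertices of $T$, $F_i$ the facet opposite $V_i$, $n_i$ its outward unit normal, $t_{ij}=(V_i-V_j)/|V_i-V_j|$, and $\lambda_i$ the barycentric coordinate equal to $1$ at $V_i$. $\mathbb{D}=\{M\in\mathbb{R}^{d\times d}:\operatorname{tr}M=0\}$, $\operatorname{dev}\tau=\tau-\frac{\operatorname{tr}\tau}{d}I$, $a\otimes b=ab^T$. For $d=2$: $S^i=\operatorname{dev}(\nabla\lambda_{i+1}\otimes\operatorname{curl}\lambda_{i+2})$ with $\operatorname{curl}\phi=(-\partial_2\phi,\partial_1\phi)^T$ and indices mod 3. For $d=3$: $S^i_0=\operatorname{dev}(\nabla\lambda_{i+1}\otimes(\nabla\lambda_{i+2}\times\nabla\lambda_{i+3}))$, $S^i_1=\operatorname{dev}(\nabla\lambda_{i+2}\otimes(\nabla\lambda_{i+3}\times\nabla\lambda_{i+1}))$, indices mod 4 (also for the tangents $t$). For a matrix $\tau$ and a facet with unit normal $n$: $\tau_{nn}=n^T\tau n$, $\tau_{nt}=\tau n-\tau_{nn}n$. *)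

theory Defs
  imports "HOL-Analysis.Analysis"
begin

text \<open>Simplices in R^d, d = CARD('n), with vertices V 0, ..., V d (indexed by nat).\<close>

definition nondeg_simplex :: "(nat \<Rightarrow> real^'n) \<Rightarrow> bool" where
  "nondeg_simplex V \<longleftrightarrow> inj_on V {..CARD('n)} \<and> \<not> affine_dependent (V ` {..CARD('n)})"

definition bary :: "(nat \<Rightarrow> real^'n) \<Rightarrow> nat \<Rightarrow> real^'n \<Rightarrow> real" where
  "bary V i = (THE f. (\<exists>g c. \<forall>x. f x = g \<bullet> x + c) \<and>
                       (\<forall>j\<le>CARD('n). f (V j) = (if j = i then 1 else 0)))"

definition grad_bary :: "(nat \<Rightarrow> real^'n) \<Rightarrow> nat \<Rightarrow> real^'n" where
  "grad_bary V i = (THE g. \<forall>x. (bary V i has_derivative (\<lambda>h. g \<bullet> h)) (at x))"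

definition facet :: "(nat \<Rightarrow> real^'n) \<Rightarrow> nat \<Rightarrow> (real^'n) set" where
  "facet V i = convex hull (V ` ({..CARD('n)} - {i}))"

definition outer_normal :: "(nat \<Rightarrow> real^'n) \<Rightarrow> nat \<Rightarrow> real^'n" where
  "outer_normal V i = (THE n. norm n = 1 \<and>
      (\<forall>x\<in>facet V i. \<forall>y\<in>facet V i. n \<bullet> (x - y) = 0) \<and>
      (\<forall>x\<in>facet V i. n \<bullet> (x - V i) > 0))"

definition tangent :: "(nat \<Rightarrow> real^'n) \<Rightarrow> nat \<Rightarrow> nat \<Rightarrow> real^'n" where
  "tangent V i j = (1 / norm (V i - V j)) *\<^sub>R (V i - V j)"

definition outer_prod :: "real^'n \<Rightarrow> real^'n \<Rightarrow> real^'n^'n" where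
  "outer_prod a b = (\<chi> i j. a $ i * b $ j)"

definition dev :: "real^'n^'n \<Rightarrow> real^'n^'n" where
  "dev \<tau> = \<tau> - (trace \<tau> / real CARD('n)) *\<^sub>R mat 1"

text \<open>The space D of trace-free matrices.\<close>
definition tracefree :: "(real^'n^'n) set" where
  "tracefree = {M. trace M = 0}"

definition nn_comp :: "real^'n^'n \<Rightarrow> real^'n \<Rightarrow> real" where
  "nn_comp \<tau> n = n \<bullet> (\<tau> *v n)"

definition nt_comp :: "real^'n^'n \<Rightarrow> real^'n \<Rightarrow> real^'n" where
  "nt_comp \<tau> n = \<tau> *v n - nn_comp \<tau> n *\<^sub>R n"

text \<open>2D curl of a scalar function with gradient g: (-d2, d1).\<close>
definition curl2 :: "real^2 \<Rightarrow> real^2" where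
  "curl2 g = vector [- (g $ 2), g $ 1]"

definition S2 :: "(nat \<Rightarrow> real^2) \<Rightarrow> nat \<Rightarrow> real^2^2" where
  "S2 V i = dev (outer_prod (grad_bary V ((i+1) mod 3)) (curl2 (grad_bary V ((i+2) mod 3))))"

definition S3 :: "(nat \<Rightarrow> real^3) \<Rightarrow> nat \<Rightarrow> nat \<Rightarrow> real^3^3" where
  "S3 V i q = (if q = 0
     then dev (outer_prod (grad_bary V ((i+1) mod 4))
                (cross3 (grad_bary V ((i+2) mod 4)) (grad_bary V ((i+3) mod 4))))
     else dev (outer_prod (grad_bary V ((i+2) mod 4))
                (cross3 (grad_bary V ((i+3) mod 4)) (grad_bary V ((i+1) mod 4)))))"

end

theory Submission
  imports Defs
begin

text \<open>
  The barycentric coordinates are affine and their gradients g_i satisfy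
  g_i \<bullet> (V_j - V_k) = \<delta>_ij - \<delta>_ik and \<Sum>_i g_i = 0, so a vector orthogonal to all but one
  g_i is zero, and the outward unit normal of F_i is n_i = - g_i / |g_i|.
  For a unit vector n the normal-tangential component of dev (a \<otimes> w) is
  (w \<bullet> n) (a - (a \<bullet> n) n), and if t \<bullet> n = 0 then t \<bullet> dev (a \<otimes> w) n = (w \<bullet> n) (t \<bullet> a).
  Each S is dev (g_a \<otimes> w), where w (a rotated gradient, resp. a cross product of two
  gradients) is orthogonal to g_j for every vertex j other than a and i. Hence its
  normal-tangential component vanishes on F_a, where g_a is normal, and on the facets with
  w \<bullet> n_j = 0, but not on F_i; and along an edge of F_i its tangential component vanishes
  exactly when the edge avoids V_a. Viewed as linear functionals of the matrix, these
  components (on F_i for d = 2, along a suitable edge of F_i for d = 3) form a biorthogonal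
  system with the d^2 - 1 matrices S, which are therefore independent and span the
  trace-free matrices, a hyperplane of dimension d^2 - 1.
\<close>

lemma linear_functional_eq_inner:
  fixes f :: "'a::euclidean_space \<Rightarrow> real"
  assumes "linear f"
  obtains w where "\<And>x. f x = w \<bullet> x"
proof
  show "f x = adjoint f 1 \<bullet> x" for x
    using adjoint_works[OF assms, of x 1] by (simp add: inner_commute inner_real_def)
qed

lemma distinct_atMost_eq:
  fixes xs :: "nat list"
  assumes "set xs \<subseteq> {..n}" and "distinct xs" and "length xs = Suc n"
  shows "set xs = {..n}"
  using card_subset_eq[OF finite_atMost assms(1)] assms(2,3) by (simp add: distinct_card)

section \<open>Barycentric coordinates\<close>

lemma nondeg_simplex_edges_independent:
  fixes V :: "nat \<Rightarrow> real^'n"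
  assumes "nondeg_simplex V"
  shows "independent ((\<lambda>j. V j - V 0) ` {1..CARD('n)})"
proof -
  have inj: "inj_on V {..CARD('n)}" and indep: "\<not> affine_dependent (V ` {..CARD('n)})"
    using assms unfolding nondeg_simplex_def by auto
  have "{..CARD('n)} = insert 0 {1..CARD('n)}" by auto
  then have vertices: "V ` {..CARD('n)} = insert (V 0) (V ` {1..CARD('n)})" by simp
  have "V 0 \<notin> V ` {1..CARD('n)}"
    using inj by (force dest: inj_onD)
  then have "\<not> dependent ((\<lambda>x. - V 0 + x) ` V ` {1..CARD('n)})"
    using indep vertices affine_dependent_iff_dependent by metis
  moreover have "(\<lambda>x. - V 0 + x) ` V ` {1..CARD('n)} = (\<lambda>j. V j - V 0) ` {1..CARD('n)}"
    by (auto simp: image_image)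
  ultimately show ?thesis by simp
qed

lemma span_nondeg_simplex_edges:
  fixes V :: "nat \<Rightarrow> real^'n"
  assumes "nondeg_simplex V"
  shows "span ((\<lambda>j. V j - V 0) ` {1..CARD('n)}) = UNIV"
proof -
  have "inj_on (\<lambda>j. V j - V 0) {1..CARD('n)}"
    using assms unfolding nondeg_simplex_def by (auto simp: inj_on_def)
  then have "card ((\<lambda>j. V j - V 0) ` {1..CARD('n)}) = CARD('n)"
    by (simp add: card_image)
  then show ?thesis
    using card_ge_dim_independent[OF subset_UNIV nondeg_simplex_edges_independent[OF assms]]
    by auto
qed

lemma affine_vanishing_on_vertices:
  fixes V :: "nat \<Rightarrow> real^'n"
  assumes "nondeg_simplex V" and vanish: "\<And>j. j \<le> CARD('n) \<Longrightarrow> g \<bullet> V j + c = 0"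
  shows "g = 0" and "c = 0"
proof -
  have "g \<bullet> (V j - V 0) = 0" if "j \<le> CARD('n)" for j
    using vanish[OF that] vanish[of 0] by (simp add: inner_diff_right)
  then have "(\<lambda>j. V j - V 0) ` {1..CARD('n)} \<subseteq> {x. g \<bullet> x = 0}"
    by auto
  then have "span ((\<lambda>j. V j - V 0) ` {1..CARD('n)}) \<subseteq> {x. g \<bullet> x = 0}"
    by (rule span_minimal[OF _ subspace_hyperplane])
  then have "g \<bullet> g = 0"
    using span_nondeg_simplex_edges[OF assms(1)] by blast
  then show "g = 0" by simp
  then show "c = 0" using vanish[of 0] by simp
qed

lemma affine_interpolation_exists:
  fixes V :: "nat \<Rightarrow> real^'n" and y :: "nat \<Rightarrow> real"
  assumes "nondeg_simplex V"
  obtains g c where "\<And>j. j \<le> CARD('n) \<Longrightarrow> g \<bullet> V j + c = y j"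
proof -
  let ?E = "\<lambda>j. V j - V 0"
  have inj: "inj_on ?E {1..CARD('n)}"
    using assms unfolding nondeg_simplex_def by (auto simp: inj_on_def)
  obtain f where "linear f"
    and f: "\<And>x. x \<in> ?E ` {1..CARD('n)} \<Longrightarrow> f x = y (inv_into {1..CARD('n)} ?E x) - y 0"
    using linear_independent_extend[OF nondeg_simplex_edges_independent[OF assms],
        of "\<lambda>x. y (inv_into {1..CARD('n)} ?E x) - y 0"] by blast
  obtain g where g: "\<And>x. f x = g \<bullet> x"
    using linear_functional_eq_inner[OF \<open>linear f\<close>] by blast
  have "g \<bullet> V j + (y 0 - g \<bullet> V 0) = y j" if "j \<le> CARD('n)" for j
  proof (cases "j = 0")
    case False
    with that have j: "j \<in> {1..CARD('n)}" by simp
    have "g \<bullet> (V j - V 0) = y j - y 0"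
      using f[OF imageI[OF j]] g[of "?E j"] inv_into_f_f[OF inj j] by simp
    then show ?thesis by (simp add: inner_diff_right)
  qed simp
  then show ?thesis using that by blast
qed

lemma obtain_other_vertex:
  obtains k :: nat where "k \<le> CARD('n::finite)" and "k \<noteq> i"
proof
  show "(if i = 0 then 1 else 0) \<le> CARD('n)"
    by (simp add: Suc_leI)
qed simp

lemma bary_eq_affine_interpolant:
  fixes V :: "nat \<Rightarrow> real^'n"
  assumes "nondeg_simplex V"
    and interp: "\<And>j. j \<le> CARD('n) \<Longrightarrow> g \<bullet> V j + c = (if j = i then 1 else 0)"
  shows "bary V i = (\<lambda>x. g \<bullet> x + c)"
  unfolding bary_def
proof (rule the_equality)
  show "(\<exists>g' c'. \<forall>x. g \<bullet> x + c = g' \<bullet> x + c') \<and>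
      (\<forall>j\<le>CARD('n). g \<bullet> V j + c = (if j = i then 1 else 0))"
    using interp by blast
next
  fix f
  assume "(\<exists>g c. \<forall>x. f x = g \<bullet> x + c) \<and> (\<forall>j\<le>CARD('n). f (V j) = (if j = i then 1 else 0))"
  then obtain g' c' where f: "\<And>x. f x = g' \<bullet> x + c'"
    and f_interp: "\<And>j. j \<le> CARD('n) \<Longrightarrow> f (V j) = (if j = i then 1 else 0)"
    by blast
  have "(g' - g) \<bullet> V j + (c' - c) = 0" if "j \<le> CARD('n)" for j
    using f[of "V j"] f_interp[OF that] interp[OF that] by (simp add: inner_diff_left)
  from affine_vanishing_on_vertices[OF assms(1) this]
  show "f = (\<lambda>x. g \<bullet> x + c)" using f by auto
qed

lemma grad_bary_eqI:
  fixes V :: "nat \<Rightarrow> real^'n"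
  assumes "bary V i = (\<lambda>x. g \<bullet> x + c)"
  shows "grad_bary V i = g"
  unfolding grad_bary_def
proof (rule the_equality)
  show "\<forall>x. (bary V i has_derivative (\<lambda>h. g \<bullet> h)) (at x)"
    unfolding assms by (auto intro!: derivative_eq_intros)
next
  fix g' assume "\<forall>x. (bary V i has_derivative (\<lambda>h. g' \<bullet> h)) (at x)"
  moreover have "(bary V i has_derivative (\<lambda>h. g \<bullet> h)) (at 0)"
    unfolding assms by (auto intro!: derivative_eq_intros)
  ultimately have "(\<lambda>h. g' \<bullet> h) = (\<lambda>h. g \<bullet> h)"
    using has_derivative_unique by blast
  then have "(g' - g) \<bullet> (g' - g) = 0"
    by (metis inner_diff_left right_minus_eq)
  then show "g' = g" by simp
qed

lemma grad_bary_inner_vertex: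
  fixes V :: "nat \<Rightarrow> real^'n"
  assumes "nondeg_simplex V" and "j \<le> CARD('n)"
  shows "grad_bary V i \<bullet> V j + bary V i 0 = (if j = i then 1 else 0)"
proof -
  obtain g c where interp: "\<And>j. j \<le> CARD('n) \<Longrightarrow> g \<bullet> V j + c = (if j = i then 1 else 0)"
    using affine_interpolation_exists[OF assms(1), of "\<lambda>j. if j = i then 1 else 0"] by blast
  have "bary V i = (\<lambda>x. g \<bullet> x + c)"
    by (rule bary_eq_affine_interpolant[OF assms(1) interp])
  with interp[OF assms(2)] show ?thesis
    using grad_bary_eqI[of V i g c] by simp
qed

lemma grad_bary_inner_edge:
  fixes V :: "nat \<Rightarrow> real^'n"
  assumes "nondeg_simplex V" and "j \<le> CARD('n)" and "k \<le> CARD('n)"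
  shows "grad_bary V i \<bullet> (V j - V k) = (if j = i then 1 else 0) - (if k = i then 1 else 0)"
  using grad_bary_inner_vertex[OF assms(1,2), of i] grad_bary_inner_vertex[OF assms(1,3), of i]
  by (simp add: inner_diff_right)

lemma grad_bary_nonzero:
  fixes V :: "nat \<Rightarrow> real^'n"
  assumes "nondeg_simplex V" and "i \<le> CARD('n)"
  shows "grad_bary V i \<noteq> 0"
proof -
  obtain k :: nat where "k \<le> CARD('n)" "k \<noteq> i"
    by (rule obtain_other_vertex)
  then show ?thesis
    using grad_bary_inner_edge[OF assms(1,2), of k i] assms(2) by auto
qed

lemma sum_grad_bary:
  fixes V :: "nat \<Rightarrow> real^'n"
  assumes "nondeg_simplex V"
  shows "(\<Sum>k\<le>CARD('n). grad_bary V k) = 0"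
proof -
  have "(\<Sum>k\<le>CARD('n). grad_bary V k) \<bullet> V j + ((\<Sum>k\<le>CARD('n). bary V k 0) - 1) = 0"
    if "j \<le> CARD('n)" for j
  proof -
    have "(\<Sum>k\<le>CARD('n). grad_bary V k) \<bullet> V j + (\<Sum>k\<le>CARD('n). bary V k 0)
        = (\<Sum>k\<le>CARD('n). if j = k then 1 else 0)"
      using grad_bary_inner_vertex[OF assms that]
      by (simp add: inner_sum_left sum.distrib[symmetric] eq_commute)
    then show ?thesis using that by simp
  qed
  then show ?thesis by (rule affine_vanishing_on_vertices[OF assms])
qed

lemma grad_bary_expansion:
  fixes V :: "nat \<Rightarrow> real^'n"
  assumes "nondeg_simplex V"
  shows "w = (\<Sum>k\<le>CARD('n). (w \<bullet> V k) *\<^sub>R grad_bary V k)"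
proof -
  let ?u = "(\<Sum>k\<le>CARD('n). (w \<bullet> V k) *\<^sub>R grad_bary V k)"
  have "(?u - w) \<bullet> V j + (\<Sum>k\<le>CARD('n). (w \<bullet> V k) * bary V k 0) = 0"
    if "j \<le> CARD('n)" for j
  proof -
    have "?u \<bullet> V j + (\<Sum>k\<le>CARD('n). (w \<bullet> V k) * bary V k 0)
        = (\<Sum>k\<le>CARD('n). (w \<bullet> V k) * (grad_bary V k \<bullet> V j + bary V k 0))"
      by (simp add: inner_sum_left sum.distrib distrib_left)
    also have "\<dots> = (\<Sum>k\<le>CARD('n). if j = k then w \<bullet> V k else 0)"
      using grad_bary_inner_vertex[OF assms that] by (intro sum.cong) auto
    also have "\<dots> = w \<bullet> V j" using that by simp
    finally show ?thesis by (simp add: inner_diff_left)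
  qed
  then have "?u - w = 0" by (rule affine_vanishing_on_vertices[OF assms])
  then show ?thesis by simp
qed

lemma orthogonal_grad_bary_eq_0:
  fixes V :: "nat \<Rightarrow> real^'n"
  assumes "nondeg_simplex V" and "\<And>k. k \<le> CARD('n) \<Longrightarrow> w \<bullet> grad_bary V k = 0"
  shows "w = 0"
proof -
  have "w \<bullet> w = w \<bullet> (\<Sum>k\<le>CARD('n). (w \<bullet> V k) *\<^sub>R grad_bary V k)"
    using grad_bary_expansion[OF assms(1), of w] by simp
  also have "\<dots> = 0" using assms(2) by (simp add: inner_sum_right)
  finally show ?thesis by simp
qed

lemma orthogonal_all_but_one_grad_bary_eq_0:
  fixes V :: "nat \<Rightarrow> real^'n"
  assumes "nondeg_simplex V" and "p \<le> CARD('n)"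
    and orth: "\<And>k. k \<le> CARD('n) \<Longrightarrow> k \<noteq> p \<Longrightarrow> w \<bullet> grad_bary V k = 0"
  shows "w = 0"
proof (rule orthogonal_grad_bary_eq_0[OF assms(1)])
  have "w \<bullet> grad_bary V p
      = w \<bullet> (\<Sum>k\<le>CARD('n). grad_bary V k) - (\<Sum>k\<in>{..CARD('n)} - {p}. w \<bullet> grad_bary V k)"
    using assms(2) by (simp add: inner_sum_right inner_add_right sum.remove)
  also have "\<dots> = 0"
    using sum_grad_bary[OF assms(1)] orth by (simp add: sum.neutral)
  finally show "w \<bullet> grad_bary V k = 0" if "k \<le> CARD('n)" for k
    using orth[OF that] by (cases "k = p") auto
qed

section \<open>Facet normals and edge tangents\<close>

lemma vertex_in_facet:
  assumes "j \<le> CARD('n)" and "j \<noteq> i"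
  shows "(V j :: real^'n) \<in> facet V i"
  unfolding facet_def using assms by (intro hull_inc) auto

lemma grad_bary_inner_facet:
  fixes V :: "nat \<Rightarrow> real^'n"
  assumes "nondeg_simplex V" and "x \<in> facet V i"
  shows "grad_bary V i \<bullet> x = - bary V i 0"
proof -
  have "facet V i \<subseteq> {x. grad_bary V i \<bullet> x = - bary V i 0}"
    unfolding facet_def
  proof (rule hull_minimal)
    show "V ` ({..CARD('n)} - {i}) \<subseteq> {x. grad_bary V i \<bullet> x = - bary V i 0}"
    proof (rule image_subsetI)
      fix j assume "j \<in> {..CARD('n)} - {i}"
      then have "grad_bary V i \<bullet> V j + bary V i 0 = 0"
        using grad_bary_inner_vertex[OF assms(1), of j i] by simp
      then show "V j \<in> {x. grad_bary V i \<bullet> x = - bary V i 0}"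
        by (simp add: eq_neg_iff_add_eq_0)
    qed
  qed (rule convex_hyperplane)
  then show ?thesis using assms(2) by blast
qed

lemma normal_of_facet_parallel_grad_bary:
  fixes V :: "nat \<Rightarrow> real^'n"
  assumes "nondeg_simplex V" and "i \<le> CARD('n)" and "k \<le> CARD('n)" and "k \<noteq> i"
    and normal: "\<forall>x\<in>facet V i. \<forall>y\<in>facet V i. n \<bullet> (x - y) = 0"
  shows "n = (n \<bullet> (V i - V k)) *\<^sub>R grad_bary V i"
proof -
  have "n = (\<Sum>j\<le>CARD('n). (n \<bullet> V j) *\<^sub>R grad_bary V j)
      - (n \<bullet> V k) *\<^sub>R (\<Sum>j\<le>CARD('n). grad_bary V j)"
    using grad_bary_expansion[OF assms(1), of n] sum_grad_bary[OF assms(1)] by simp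
  also have "\<dots> = (\<Sum>j\<le>CARD('n). (n \<bullet> (V j - V k)) *\<^sub>R grad_bary V j)"
    by (simp add: scaleR_sum_right sum_subtractf[symmetric] inner_diff_right scaleR_diff_left)
  also have "\<dots> = (\<Sum>j\<in>{i}. (n \<bullet> (V j - V k)) *\<^sub>R grad_bary V j)"
  proof (rule sum.mono_neutral_right)
    show "\<forall>j\<in>{..CARD('n)} - {i}. (n \<bullet> (V j - V k)) *\<^sub>R grad_bary V j = 0"
      using normal vertex_in_facet[OF assms(3,4)] vertex_in_facet[of _ i V] by simp
  qed (use assms(2) in auto)
  finally show ?thesis by simp
qed

lemma outer_normal_eq:
  fixes V :: "nat \<Rightarrow> real^'n"
  assumes "nondeg_simplex V" and "i \<le> CARD('n)"
  shows "outer_normal V i = - (1 / norm (grad_bary V i)) *\<^sub>R grad_bary V i"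
  unfolding outer_normal_def
proof (rule the_equality)
  let ?g = "grad_bary V i"
  have g: "?g \<noteq> 0" by (rule grad_bary_nonzero[OF assms])
  have vertex: "?g \<bullet> V i = 1 - bary V i 0"
    using grad_bary_inner_vertex[OF assms(1,2), of i] by simp
  have "(- (1 / norm ?g) *\<^sub>R ?g) \<bullet> (x - V i) = 1 / norm ?g" if "x \<in> facet V i" for x
    using vertex grad_bary_inner_facet[OF assms(1) that]
    by (simp add: inner_diff_right add_divide_distrib[symmetric])
  then show "norm (- (1 / norm ?g) *\<^sub>R ?g) = 1 \<and>
      (\<forall>x\<in>facet V i. \<forall>y\<in>facet V i. (- (1 / norm ?g) *\<^sub>R ?g) \<bullet> (x - y) = 0) \<and>
      (\<forall>x\<in>facet V i. (- (1 / norm ?g) *\<^sub>R ?g) \<bullet> (x - V i) > 0)"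
    using g grad_bary_inner_facet[OF assms(1)] by (simp add: inner_diff_right)
next
  fix n
  assume n: "norm n = 1 \<and> (\<forall>x\<in>facet V i. \<forall>y\<in>facet V i. n \<bullet> (x - y) = 0) \<and>
      (\<forall>x\<in>facet V i. n \<bullet> (x - V i) > 0)"
  obtain k :: nat where k: "k \<le> CARD('n)" "k \<noteq> i"
    by (rule obtain_other_vertex)
  define s where "s = n \<bullet> (V i - V k)"
  have parallel: "n = s *\<^sub>R grad_bary V i"
    unfolding s_def using normal_of_facet_parallel_grad_bary[OF assms k] n by blast
  have "n \<bullet> (V k - V i) > 0" using n vertex_in_facet[OF k] by blast
  then have "s < 0" unfolding s_def by (simp add: inner_diff_right)
  moreover have "\<bar>s\<bar> * norm (grad_bary V i) = 1" using n parallel by simp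
  ultimately have "s = - (1 / norm (grad_bary V i))"
    using grad_bary_nonzero[OF assms] by (simp add: field_simps)
  then show "n = - (1 / norm (grad_bary V i)) *\<^sub>R grad_bary V i" using parallel by simp
qed

lemma inner_outer_normal:
  fixes V :: "nat \<Rightarrow> real^'n"
  assumes "nondeg_simplex V" and "i \<le> CARD('n)"
  shows "w \<bullet> outer_normal V i = - (w \<bullet> grad_bary V i) / norm (grad_bary V i)"
  using outer_normal_eq[OF assms] by simp

lemma inner_outer_normal_eq_0_iff:
  fixes V :: "nat \<Rightarrow> real^'n"
  assumes "nondeg_simplex V" and "i \<le> CARD('n)"
  shows "w \<bullet> outer_normal V i = 0 \<longleftrightarrow> w \<bullet> grad_bary V i = 0"
  using inner_outer_normal[OF assms] grad_bary_nonzero[OF assms] by simp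

lemma norm_outer_normal:
  fixes V :: "nat \<Rightarrow> real^'n"
  assumes "nondeg_simplex V" and "i \<le> CARD('n)"
  shows "norm (outer_normal V i) = 1"
  using outer_normal_eq[OF assms] grad_bary_nonzero[OF assms] by simp

lemma outer_normal_inner_edge:
  fixes V :: "nat \<Rightarrow> real^'n"
  assumes "nondeg_simplex V" and "i \<le> CARD('n)" and "x \<le> CARD('n)" and "y \<le> CARD('n)"
    and "x \<noteq> i" and "y \<noteq> i"
  shows "outer_normal V i \<bullet> (V x - V y) = 0"
  using grad_bary_inner_edge[OF assms(1,3,4), of i] assms(5,6)
    inner_outer_normal_eq_0_iff[OF assms(1,2), of "V x - V y"]
  by (simp add: inner_commute)

lemma tangent_inner_outer_normal:
  fixes V :: "nat \<Rightarrow> real^'n"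
  assumes "nondeg_simplex V" and "i \<le> CARD('n)" and "x \<le> CARD('n)" and "y \<le> CARD('n)"
    and "x \<noteq> i" and "y \<noteq> i"
  shows "tangent V x y \<bullet> outer_normal V i = 0"
  using outer_normal_inner_edge[OF assms] unfolding tangent_def by (simp add: inner_commute)

lemma tangent_inner_grad_bary:
  fixes V :: "nat \<Rightarrow> real^'n"
  assumes "nondeg_simplex V" and "x \<le> CARD('n)" and "y \<le> CARD('n)"
  shows "tangent V x y \<bullet> grad_bary V a
    = ((if x = a then 1 else 0) - (if y = a then 1 else 0)) / norm (V x - V y)"
  using grad_bary_inner_edge[OF assms, of a] unfolding tangent_def by (simp add: inner_commute)

lemma tangent_inner_grad_bary_nonzero:
  fixes V :: "nat \<Rightarrow> real^'n"
  assumes "nondeg_simplex V" and "x \<le> CARD('n)" and "y \<le> CARD('n)"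
    and "x \<noteq> y" and "x = a \<or> y = a"
  shows "tangent V x y \<bullet> grad_bary V a \<noteq> 0"
proof -
  have "V x \<noteq> V y"
    using assms(1-4) unfolding nondeg_simplex_def by (auto dest: inj_onD)
  then show ?thesis
    using tangent_inner_grad_bary[OF assms(1-3), of a] assms(4,5) by auto
qed

lemma grad_bary_tangential_part_eq_0:
  fixes V :: "nat \<Rightarrow> real^'n"
  assumes "nondeg_simplex V" and "i \<le> CARD('n)"
  shows "grad_bary V i - (grad_bary V i \<bullet> outer_normal V i) *\<^sub>R outer_normal V i = 0"
  using grad_bary_nonzero[OF assms]
  by (simp add: outer_normal_eq[OF assms] dot_square_norm power2_eq_square)

lemma grad_bary_tangential_part_nonzero:
  fixes V :: "nat \<Rightarrow> real^'n"
  assumes "nondeg_simplex V" and "i \<le> CARD('n)" and "a \<le> CARD('n)" and "b \<le> CARD('n)"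
    and "a \<noteq> i" and "b \<noteq> i" and "b \<noteq> a"
  shows "grad_bary V a - (grad_bary V a \<bullet> outer_normal V i) *\<^sub>R outer_normal V i \<noteq> 0"
proof
  assume "grad_bary V a - (grad_bary V a \<bullet> outer_normal V i) *\<^sub>R outer_normal V i = 0"
  then have "grad_bary V a \<bullet> (V a - V b)
      = (grad_bary V a \<bullet> outer_normal V i) * (outer_normal V i \<bullet> (V a - V b))"
    by (metis eq_iff_diff_eq_0 inner_scaleR_left)
  moreover have "outer_normal V i \<bullet> (V a - V b) = 0"
    by (rule outer_normal_inner_edge[OF assms(1-6)])
  ultimately show False
    using grad_bary_inner_edge[OF assms(1,3,4), of a] assms(7) by simp
qed

section \<open>Deviatoric matrices\<close>

lemma outer_prod_mult_vec: "outer_prod a w *v n = (w \<bullet> n) *\<^sub>R a"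
  by (simp add: vec_eq_iff outer_prod_def matrix_vector_mult_def inner_vec_def
      sum_distrib_left mult.commute mult.left_commute)

lemma dev_mult_vec: "dev \<tau> *v n = \<tau> *v n - (trace \<tau> / real CARD('n)) *\<^sub>R (n :: real^'n)"
  unfolding dev_def
  by (simp add: matrix_vector_mult_diff_rdistrib scaleR_matrix_vector_assoc[symmetric])

lemma trace_dev: "trace (dev (\<tau> :: real^'n^'n)) = 0"
proof -
  have "trace ((trace \<tau> / real CARD('n)) *\<^sub>R (mat 1 :: real^'n^'n)) = trace \<tau>"
    by (simp add: trace_def mat_def)
  then show ?thesis unfolding dev_def by (simp add: trace_sub)
qed

lemma nt_comp_dev_outer_prod:
  fixes n :: "real^'n"
  assumes "norm n = 1"
  shows "nt_comp (dev (outer_prod a w)) n = (w \<bullet> n) *\<^sub>R (a - (a \<bullet> n) *\<^sub>R n)"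
proof -
  have "n \<bullet> n = 1" using assms by (simp add: dot_square_norm)
  then show ?thesis
    unfolding nt_comp_def nn_comp_def dev_mult_vec outer_prod_mult_vec
    by (simp add: inner_diff_right algebra_simps inner_commute)
qed

lemma inner_dev_outer_prod_mult_vec:
  fixes n :: "real^'n"
  assumes "t \<bullet> n = 0"
  shows "t \<bullet> (dev (outer_prod a w) *v n) = (w \<bullet> n) * (t \<bullet> a)"
  using assms by (simp add: dev_mult_vec outer_prod_mult_vec inner_diff_right)

lemma inner_mult_vec_eq_0_if_nt_comp_eq_0:
  assumes "nt_comp M n = 0" and "t \<bullet> n = 0"
  shows "t \<bullet> (M *v n) = 0"
  using assms unfolding nt_comp_def by (simp add: eq_iff_diff_eq_0[symmetric])

lemma linear_nt_comp: "linear (\<lambda>M :: real^'n^'n. nt_comp M n)"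
  unfolding nt_comp_def nn_comp_def
  by (rule linearI) (simp_all add: matrix_vector_mult_add_rdistrib
      scaleR_matrix_vector_assoc[symmetric] inner_add_right algebra_simps)

lemma linear_inner_mult_vec: "linear (\<lambda>M :: real^'n^'m. t \<bullet> (M *v n))"
  by (rule linearI) (simp_all add: matrix_vector_mult_add_rdistrib
      scaleR_matrix_vector_assoc[symmetric] inner_add_right)

lemma biorthogonal_imp_independent:
  fixes f :: "'k \<Rightarrow> 'v::real_vector" and L :: "'k \<Rightarrow> 'v \<Rightarrow> 'w::real_vector"
  assumes "finite K" and linear: "\<And>k. k \<in> K \<Longrightarrow> linear (L k)"
    and diag: "\<And>k. k \<in> K \<Longrightarrow> L k (f k) \<noteq> 0"
    and off_diag: "\<And>k k'. k \<in> K \<Longrightarrow> k' \<in> K \<Longrightarrow> k' \<noteq> k \<Longrightarrow> L k (f k') = 0"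
  shows "inj_on f K" and "independent (f ` K)"
proof -
  show inj: "inj_on f K"
    using diag off_diag by (metis inj_onI)
  show "independent (f ` K)"
  proof (rule independent_if_scalars_zero)
    fix c x assume sum: "(\<Sum>x\<in>f ` K. c x *\<^sub>R x) = 0" and "x \<in> f ` K"
    then obtain k where k: "k \<in> K" "x = f k" by auto
    have "0 = L k (\<Sum>k'\<in>K. c (f k') *\<^sub>R f k')"
      using sum linear[OF k(1)] by (simp add: sum.reindex[OF inj] linear_0)
    also have "\<dots> = (\<Sum>k'\<in>K. c (f k') *\<^sub>R L k (f k'))"
      using linear[OF k(1)] by (simp add: linear_sum linear_scale)
    also have "\<dots> = c (f k) *\<^sub>R L k (f k)"
      using off_diag[OF k(1)] k(1) \<open>finite K\<close>
      by (simp add: sum.remove[of K k] sum.neutral)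
    finally show "c x = 0" using diag[OF k(1)] k(2) by simp
  qed (use \<open>finite K\<close> in simp)
qed

lemma inner_mat_1_eq_trace: "(mat 1 :: real^'n^'n) \<bullet> M = trace M"
  unfolding inner_vec_def trace_def mat_def by (simp add: mult_if_delta)

lemma tracefree_eq_hyperplane: "tracefree = {M :: real^'n^'n. mat 1 \<bullet> M = 0}"
  by (simp add: tracefree_def inner_mat_1_eq_trace)

lemma subspace_tracefree: "subspace (tracefree :: (real^'n^'n) set)"
  unfolding tracefree_eq_hyperplane by (rule subspace_hyperplane)

lemma dim_tracefree: "dim (tracefree :: (real^'n^'n) set) = CARD('n) * CARD('n) - 1"
proof -
  have "(mat 1 :: real^'n^'n) \<noteq> 0"
    by (simp add: vec_eq_iff mat_def)
  then show ?thesis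
    unfolding tracefree_eq_hyperplane by (simp add: dim_hyperplane)
qed

lemma span_eq_tracefree:
  fixes B :: "(real^'n^'n) set"
  assumes "independent B" and "B \<subseteq> tracefree" and "card B = CARD('n) * CARD('n) - 1"
  shows "span B = tracefree"
proof
  show "span B \<subseteq> tracefree"
    using span_minimal[OF assms(2) subspace_tracefree] .
  show "tracefree \<subseteq> span B"
    using card_ge_dim_independent[OF assms(2,1)] assms(3) dim_tracefree[where 'n='n] by simp
qed

lemma nt_comp_dev_outer_grad_bary_self:
  fixes V :: "nat \<Rightarrow> real^'n"
  assumes "nondeg_simplex V" and "j \<le> CARD('n)"
  shows "nt_comp (dev (outer_prod (grad_bary V j) w)) (outer_normal V j) = 0"
  using nt_comp_dev_outer_prod[OF norm_outer_normal[OF assms]]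
    grad_bary_tangential_part_eq_0[OF assms] by simp

lemma nt_comp_dev_outer_orthogonal:
  fixes V :: "nat \<Rightarrow> real^'n"
  assumes "nondeg_simplex V" and "j \<le> CARD('n)" and "w \<bullet> grad_bary V j = 0"
  shows "nt_comp (dev (outer_prod a w)) (outer_normal V j) = 0"
  using nt_comp_dev_outer_prod[OF norm_outer_normal[OF assms(1,2)]]
    inner_outer_normal_eq_0_iff[OF assms(1,2)] assms(3) by simp

lemma nt_comp_dev_outer_grad_bary_nonzero:
  fixes V :: "nat \<Rightarrow> real^'n"
  assumes "nondeg_simplex V" and "j \<le> CARD('n)" and "a \<le> CARD('n)" and "b \<le> CARD('n)"
    and "a \<noteq> j" and "b \<noteq> j" and "b \<noteq> a" and "w \<bullet> grad_bary V j \<noteq> 0"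
  shows "nt_comp (dev (outer_prod (grad_bary V a) w)) (outer_normal V j) \<noteq> 0"
  using nt_comp_dev_outer_prod[OF norm_outer_normal[OF assms(1,2)]]
    inner_outer_normal_eq_0_iff[OF assms(1,2)] assms(8)
    grad_bary_tangential_part_nonzero[OF assms(1-7)] by simp

lemma tangent_inner_dev_outer_mult_normal:
  fixes V :: "nat \<Rightarrow> real^'n"
  assumes "nondeg_simplex V" and "i \<le> CARD('n)" and "x \<le> CARD('n)" and "y \<le> CARD('n)"
    and "x \<noteq> i" and "y \<noteq> i"
  shows "tangent V x y \<bullet> (dev (outer_prod a w) *v outer_normal V i)
    = (w \<bullet> outer_normal V i) * (tangent V x y \<bullet> a)"
  by (rule inner_dev_outer_prod_mult_vec[OF tangent_inner_outer_normal[OF assms]])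

section \<open>Dimension two\<close>

lemma inner_curl2_self: "curl2 g \<bullet> g = 0"
  unfolding curl2_def inner_vec_def by (simp add: sum_2 vector_2)

lemma curl2_eq_0_iff: "curl2 g = 0 \<longleftrightarrow> g = 0"
  unfolding curl2_def by (auto simp: vec_eq_iff forall_2 vector_2)

lemma curl2_grad_bary_inner_nonzero:
  fixes V :: "nat \<Rightarrow> real^2"
  assumes "nondeg_simplex V" and "i \<le> 2" and "a \<le> 2" and "b \<le> 2"
    and "i \<noteq> a" and "i \<noteq> b" and "a \<noteq> b"
  shows "curl2 (grad_bary V b) \<bullet> grad_bary V i \<noteq> 0"
proof
  have vertices: "{i, a, b} = {..2}"
    using distinct_atMost_eq[of "[i, a, b]" 2] assms(2-7) by simp
  assume "curl2 (grad_bary V b) \<bullet> grad_bary V i = 0"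
  then have "curl2 (grad_bary V b) \<bullet> grad_bary V k = 0" if "k \<le> 2" "k \<noteq> a" for k
    using that vertices inner_curl2_self[of "grad_bary V b"] by auto
  then have "curl2 (grad_bary V b) = 0"
    using orthogonal_all_but_one_grad_bary_eq_0[OF assms(1)] assms(3) by simp
  then show False
    using grad_bary_nonzero[OF assms(1)] assms(4) by (simp add: curl2_eq_0_iff)
qed

lemma nt_comp_dev_outer_grad_bary_curl2:
  fixes V :: "nat \<Rightarrow> real^2"
  assumes "nondeg_simplex V" and "i \<le> 2" and "a \<le> 2" and "b \<le> 2"
    and "i \<noteq> a" and "i \<noteq> b" and "a \<noteq> b" and "j \<le> 2"
  shows "nt_comp (dev (outer_prod (grad_bary V a) (curl2 (grad_bary V b)))) (outer_normal V j) = 0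
    \<longleftrightarrow> j \<noteq> i"
proof -
  have "{i, a, b} = {..2}"
    using distinct_atMost_eq[of "[i, a, b]" 2] assms(2-7) by simp
  with assms(8) consider "j = a" | "j = b" | "j = i"
    by blast
  then show ?thesis
  proof cases
    case 1
    then show ?thesis
      using nt_comp_dev_outer_grad_bary_self[OF assms(1)] assms by simp
  next
    case 2
    then show ?thesis
      using nt_comp_dev_outer_orthogonal[OF assms(1)] inner_curl2_self assms by simp
  next
    case 3
    then show ?thesis
      using nt_comp_dev_outer_grad_bary_nonzero[OF assms(1), of i a b]
        curl2_grad_bary_inner_nonzero[OF assms(1-7)] assms by simp
  qed
qed

lemma S2_nt_comp_eq_0_iff:
  fixes V :: "nat \<Rightarrow> real^2"
  assumes "nondeg_simplex V" and "i \<le> 2" and "j \<le> 2"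
  shows "nt_comp (S2 V i) (outer_normal V j) = 0 \<longleftrightarrow> j \<noteq> i"
  unfolding S2_def
  by (rule nt_comp_dev_outer_grad_bary_curl2[OF assms(1,2) _ _ _ _ _ assms(3)])
    (use assms(2) in \<open>auto simp: mod_Suc\<close>)

lemma S2_basis:
  fixes V :: "nat \<Rightarrow> real^2"
  assumes "nondeg_simplex V"
  shows "inj_on (S2 V) {0..2}" and "independent (S2 V ` {0..2})"
    and "span (S2 V ` {0..2}) = tracefree"
proof -
  show inj: "inj_on (S2 V) {0..2}" and indep: "independent (S2 V ` {0..2})"
    using biorthogonal_imp_independent[of "{0..2}" "\<lambda>k M. nt_comp M (outer_normal V k)" "S2 V"]
      linear_nt_comp S2_nt_comp_eq_0_iff[OF assms] by auto
  have "S2 V ` {0..2} \<subseteq> tracefree"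
    by (auto simp: S2_def tracefree_def trace_dev)
  moreover have "card (S2 V ` {0..2}) = 3"
    using card_image[OF inj] by simp
  ultimately show "span (S2 V ` {0..2}) = tracefree"
    using span_eq_tracefree[OF indep] by simp
qed

section \<open>Dimension three\<close>

lemma cross3_grad_bary_inner_nonzero:
  fixes V :: "nat \<Rightarrow> real^3"
  assumes "nondeg_simplex V" and "p \<le> 3" and "q \<le> 3" and "r \<le> 3" and "s \<le> 3"
    and "p \<noteq> q" and "p \<noteq> r" and "p \<noteq> s" and "q \<noteq> r" and "q \<noteq> s" and "r \<noteq> s"
  shows "cross3 (grad_bary V q) (grad_bary V r) \<bullet> grad_bary V s \<noteq> 0"
proof
  let ?u = "cross3 (grad_bary V q) (grad_bary V r)"
  have "?u \<bullet> cross3 (V q - V p) (V r - V p) = 1"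
    using grad_bary_inner_edge[OF assms(1), of q p] grad_bary_inner_edge[OF assms(1), of r p] assms
    by (simp add: dot_cross)
  then have "?u \<noteq> 0" by auto
  have vertices: "{p, q, r, s} = {..3}"
    using distinct_atMost_eq[of "[p, q, r, s]" 3] assms(2-11) by simp
  assume "?u \<bullet> grad_bary V s = 0"
  then have "?u \<bullet> grad_bary V k = 0" if "k \<le> 3" "k \<noteq> p" for k
    using that vertices dot_cross_self[of "grad_bary V q" "grad_bary V r"]
    by (auto simp: inner_commute)
  then have "?u = 0"
    using orthogonal_all_but_one_grad_bary_eq_0[OF assms(1)] assms(2) by simp
  with \<open>?u \<noteq> 0\<close> show False ..
qed

lemma dev_outer_grad_bary_cross3:
  fixes V :: "nat \<Rightarrow> real^3"
  assumes "nondeg_simplex V" and "p \<le> 3" and "x \<le> 3" and "y \<le> 3" and "z \<le> 3"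
    and "p \<noteq> x" and "p \<noteq> y" and "p \<noteq> z" and "x \<noteq> y" and "x \<noteq> z" and "y \<noteq> z"
    and M: "M = dev (outer_prod (grad_bary V x) (cross3 (grad_bary V y) (grad_bary V z)))"
  shows "j \<le> 3 \<Longrightarrow> nt_comp M (outer_normal V j) = 0 \<longleftrightarrow> j \<noteq> p"
    and "tangent V y z \<bullet> (M *v outer_normal V p) = 0"
    and "tangent V x y \<bullet> (M *v outer_normal V p) \<noteq> 0"
    and "tangent V z x \<bullet> (M *v outer_normal V p) \<noteq> 0"
proof -
  let ?w = "cross3 (grad_bary V y) (grad_bary V z)"
  have w_p: "?w \<bullet> grad_bary V p \<noteq> 0"
    using cross3_grad_bary_inner_nonzero[OF assms(1), of x y z p] assms(2-11) by simp
  then have w_n: "?w \<bullet> outer_normal V p \<noteq> 0"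
    using inner_outer_normal_eq_0_iff[OF assms(1)] assms(2) by simp
  show "nt_comp M (outer_normal V j) = 0 \<longleftrightarrow> j \<noteq> p" if j: "j \<le> 3"
  proof -
    have "{p, x, y, z} = {..3}"
      using distinct_atMost_eq[of "[p, x, y, z]" 3] assms(2-11) by simp
    with j consider "j = x" | "j = y" | "j = z" | "j = p"
      by blast
    then show ?thesis
    proof cases
      case 1
      then show ?thesis
        unfolding M using nt_comp_dev_outer_grad_bary_self[OF assms(1)] assms by simp
    next
      case 2
      then show ?thesis
        unfolding M using nt_comp_dev_outer_orthogonal[OF assms(1)] dot_cross_self assms
        by (simp add: inner_commute)
    next
      case 3
      then show ?thesis
        unfolding M using nt_comp_dev_outer_orthogonal[OF assms(1)] dot_cross_self assms by simp
    next
      case 4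
      then show ?thesis
        unfolding M using nt_comp_dev_outer_grad_bary_nonzero[OF assms(1), of p x y] w_p assms
        by simp
    qed
  qed
  show "tangent V y z \<bullet> (M *v outer_normal V p) = 0"
    unfolding M using tangent_inner_dev_outer_mult_normal[OF assms(1), of p y z]
      tangent_inner_grad_bary[OF assms(1), of y z x] assms by simp
  show "tangent V x y \<bullet> (M *v outer_normal V p) \<noteq> 0"
    unfolding M using tangent_inner_dev_outer_mult_normal[OF assms(1), of p x y]
      tangent_inner_grad_bary_nonzero[OF assms(1), of x y x] w_n assms by simp
  show "tangent V z x \<bullet> (M *v outer_normal V p) \<noteq> 0"
    unfolding M using tangent_inner_dev_outer_mult_normal[OF assms(1), of p z x]
      tangent_inner_grad_bary_nonzero[OF assms(1), of z x x] w_n assms by simp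
qed

lemma mod_4_shifts:
  fixes i :: nat
  assumes "i \<le> 3"
  shows "(i + 1) mod 4 \<le> 3" and "(i + 2) mod 4 \<le> 3" and "(i + 3) mod 4 \<le> 3"
    and "i \<noteq> (i + 1) mod 4" and "i \<noteq> (i + 2) mod 4" and "i \<noteq> (i + 3) mod 4"
    and "(i + 1) mod 4 \<noteq> (i + 2) mod 4" and "(i + 1) mod 4 \<noteq> (i + 3) mod 4"
    and "(i + 2) mod 4 \<noteq> (i + 3) mod 4"
  using assms by presburger+

lemma S3_eq_dev_outer_grad_bary_cross3:
  "S3 V i 0 = dev (outer_prod (grad_bary V ((i+1) mod 4))
     (cross3 (grad_bary V ((i+2) mod 4)) (grad_bary V ((i+3) mod 4))))"
  "S3 V i 1 = dev (outer_prod (grad_bary V ((i+2) mod 4))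
     (cross3 (grad_bary V ((i+3) mod 4)) (grad_bary V ((i+1) mod 4))))"
  by (simp_all add: S3_def)

lemma
  fixes V :: "nat \<Rightarrow> real^3"
  assumes "nondeg_simplex V" and "i \<le> 3"
  shows S3_nt_comp_eq_0_iff:
      "\<And>j q. j \<le> 3 \<Longrightarrow> q \<le> 1 \<Longrightarrow> nt_comp (S3 V i q) (outer_normal V j) = 0 \<longleftrightarrow> j \<noteq> i"
    and S3_tangent_components:
      "tangent V ((i+2) mod 4) ((i+3) mod 4) \<bullet> (S3 V i 0 *v outer_normal V i) = 0"
      "tangent V ((i+1) mod 4) ((i+2) mod 4) \<bullet> (S3 V i 0 *v outer_normal V i) \<noteq> 0"
      "tangent V ((i+3) mod 4) ((i+1) mod 4) \<bullet> (S3 V i 0 *v outer_normal V i) \<noteq> 0"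
      "tangent V ((i+2) mod 4) ((i+3) mod 4) \<bullet> (S3 V i 1 *v outer_normal V i) \<noteq> 0"
      "tangent V ((i+1) mod 4) ((i+2) mod 4) \<bullet> (S3 V i 1 *v outer_normal V i) \<noteq> 0"
      "tangent V ((i+3) mod 4) ((i+1) mod 4) \<bullet> (S3 V i 1 *v outer_normal V i) = 0"
proof -
  note idx = mod_4_shifts[OF assms(2)]
  note S0 = dev_outer_grad_bary_cross3[OF assms idx(1-9) S3_eq_dev_outer_grad_bary_cross3(1)]
  note S1 = dev_outer_grad_bary_cross3[OF assms idx(2,3,1) idx(5,6,4) idx(9)
      idx(7)[symmetric] idx(8)[symmetric] S3_eq_dev_outer_grad_bary_cross3(2)]
  show "nt_comp (S3 V i q) (outer_normal V j) = 0 \<longleftrightarrow> j \<noteq> i" if "j \<le> 3" "q \<le> 1" for j q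
  proof -
    have "q = 0 \<or> q = 1" using that(2) by auto
    then show ?thesis using S0(1)[OF that(1)] S1(1)[OF that(1)] by auto
  qed
  show "tangent V ((i+2) mod 4) ((i+3) mod 4) \<bullet> (S3 V i 0 *v outer_normal V i) = 0"
    "tangent V ((i+1) mod 4) ((i+2) mod 4) \<bullet> (S3 V i 0 *v outer_normal V i) \<noteq> 0"
    "tangent V ((i+3) mod 4) ((i+1) mod 4) \<bullet> (S3 V i 0 *v outer_normal V i) \<noteq> 0"
    by (fact S0(2-4))+
  show "tangent V ((i+3) mod 4) ((i+1) mod 4) \<bullet> (S3 V i 1 *v outer_normal V i) = 0"
    "tangent V ((i+2) mod 4) ((i+3) mod 4) \<bullet> (S3 V i 1 *v outer_normal V i) \<noteq> 0"
    "tangent V ((i+1) mod 4) ((i+2) mod 4) \<bullet> (S3 V i 1 *v outer_normal V i) \<noteq> 0"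
    by (fact S1(2-4))+
qed

lemma S3_basis:
  fixes V :: "nat \<Rightarrow> real^3"
  assumes "nondeg_simplex V"
  defines "K \<equiv> {0..3::nat} \<times> {0..1::nat}"
  shows "inj_on (\<lambda>(i, q). S3 V i q) K" and "independent ((\<lambda>(i, q). S3 V i q) ` K)"
    and "span ((\<lambda>(i, q). S3 V i q) ` K) = tracefree"
proof -
  let ?S = "\<lambda>(i, q). S3 V i q"
  txt \<open>S^i_q is tested along the edge of F_i on which S^i_(1-q) has vanishing tangential
    component.\<close>
  define L where "L = (\<lambda>(i, q :: nat) M.
    (if q = 0 then tangent V ((i+3) mod 4) ((i+1) mod 4) else tangent V ((i+2) mod 4) ((i+3) mod 4))
      \<bullet> (M *v outer_normal V i))"
  have linear: "linear (L k)" for k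
    unfolding L_def by (cases k) (simp add: linear_inner_mult_vec)
  have diag: "L k (?S k) \<noteq> 0" if k: "k \<in> K" for k
  proof -
    obtain i q where "k = (i, q)" "i \<le> 3" "q \<le> 1"
      using k unfolding K_def by (cases k) auto
    moreover have "q = 0 \<or> q = 1" using \<open>q \<le> 1\<close> by auto
    ultimately show ?thesis
      using S3_tangent_components(3,4)[OF assms(1), of i] by (auto simp: L_def)
  qed
  have off_diag: "L k (?S k') = 0" if "k \<in> K" "k' \<in> K" and "k' \<noteq> k" for k k'
  proof -
    obtain i q where k: "k = (i, q)" "i \<le> 3" "q \<le> 1"
      using \<open>k \<in> K\<close> unfolding K_def by (cases k) auto
    obtain i' q' where k': "k' = (i', q')" "i' \<le> 3" "q' \<le> 1"
      using \<open>k' \<in> K\<close> unfolding K_def by (cases k') auto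
    show ?thesis
    proof (cases "i' = i")
      case True
      then have "q = 0 \<and> q' = 1 \<or> q = 1 \<and> q' = 0"
        using \<open>k' \<noteq> k\<close> k k' by auto
      then show ?thesis
        using S3_tangent_components(1,6)[OF assms(1) k(2)] k(1) k'(1) True
        by (auto simp: L_def)
    next
      case False
      have "CARD(3) = 3" by simp
      note tangent_orth = tangent_inner_outer_normal[OF assms(1), unfolded this, OF k(2)]
      note idx = mod_4_shifts[OF k(2)]
      have "nt_comp (S3 V i' q') (outer_normal V i) = 0"
        using S3_nt_comp_eq_0_iff[OF assms(1) k'(2) k(2) k'(3)] False by simp
      moreover have "tangent V ((i+3) mod 4) ((i+1) mod 4) \<bullet> outer_normal V i = 0"
        and "tangent V ((i+2) mod 4) ((i+3) mod 4) \<bullet> outer_normal V i = 0"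
        using tangent_orth[OF idx(3,1) idx(6,4)[symmetric]]
          tangent_orth[OF idx(2,3) idx(5,6)[symmetric]] by blast+
      ultimately show ?thesis
        unfolding L_def k k' by (simp add: inner_mult_vec_eq_0_if_nt_comp_eq_0)
    qed
  qed
  have "finite K" by (simp add: K_def)
  show inj: "inj_on ?S K" and indep: "independent (?S ` K)"
    using biorthogonal_imp_independent[OF \<open>finite K\<close> linear diag off_diag] by auto
  have "?S ` K \<subseteq> tracefree"
    by (auto simp: S3_def tracefree_def trace_dev)
  moreover have "card (?S ` K) = 8"
    using card_image[OF inj] by (simp add: K_def)
  ultimately show "span (?S ` K) = tracefree"
    using span_eq_tracefree[OF indep] by simp
qed

theorem lemma5p1:
  shows
  "(\<forall>V :: nat \<Rightarrow> real^2. nondeg_simplex V \<longrightarrow>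
      (inj_on (S2 V) {0..2} \<and> independent (S2 V ` {0..2}) \<and> span (S2 V ` {0..2}) = tracefree) \<and>
      (\<forall>i\<in>{0..2}. \<forall>j\<in>{0..2}. i \<noteq> j \<longrightarrow> nt_comp (S2 V i) (outer_normal V j) = 0) \<and>
      (\<forall>i\<in>{0..2}. nt_comp (S2 V i) (outer_normal V i) \<noteq> 0))
   \<and>
   (\<forall>V :: nat \<Rightarrow> real^3. nondeg_simplex V \<longrightarrow>
      (inj_on (\<lambda>(i, q). S3 V i q) ({0..3} \<times> {0..1})
        \<and> independent ((\<lambda>(i, q). S3 V i q) ` ({0..3} \<times> {0..1}))
        \<and> span ((\<lambda>(i, q). S3 V i q) ` ({0..3} \<times> {0..1})) = tracefree) \<and>
      (\<forall>i\<in>{0..3}. \<forall>j\<in>{0..3}. \<forall>q\<in>{0..1}. i \<noteq> j \<longrightarrow>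
          nt_comp (S3 V i q) (outer_normal V j) = 0) \<and>
      (\<forall>i\<in>{0..3}. \<forall>q\<in>{0..1}. nt_comp (S3 V i q) (outer_normal V i) \<noteq> 0) \<and>
      (\<forall>i\<in>{0..3}.
          tangent V ((i+2) mod 4) ((i+3) mod 4) \<bullet> (S3 V i 0 *v outer_normal V i) = 0 \<and>
          tangent V ((i+1) mod 4) ((i+2) mod 4) \<bullet> (S3 V i 0 *v outer_normal V i) \<noteq> 0 \<and>
          tangent V ((i+3) mod 4) ((i+1) mod 4) \<bullet> (S3 V i 0 *v outer_normal V i) \<noteq> 0 \<and>
          tangent V ((i+2) mod 4) ((i+3) mod 4) \<bullet> (S3 V i 1 *v outer_normal V i) \<noteq> 0 \<and>
          tangent V ((i+1) mod 4) ((i+2) mod 4) \<bullet> (S3 V i 1 *v outer_normal V i) \<noteq> 0 \<and>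
          tangent V ((i+3) mod 4) ((i+1) mod 4) \<bullet> (S3 V i 1 *v outer_normal V i) = 0))"
  using S2_basis S2_nt_comp_eq_0_iff S3_basis S3_nt_comp_eq_0_iff S3_tangent_components
  by auto

end
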